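(* Let $\mathcal{X}$ be an input space, $\mathcal{Y}=\{0,1,\varnothing\}$, $\mathcal{H}$ a class of functions $\mathcal{X}\to\{0,1\}$, and $Z=(X,Y)\sim P$ on $\mathcal{X}\times\mathcal{Y}$ with $\Pr[Y=y]>0$ for $y\in\{0,1\}$. Let $Z_1,\dots,Z_n$ be an i.i.d. sample from $P$ and $Z'_1,\dots,Z'_n$ an independent i.i.d. "ghost sample" from $P$. Let $R(h)=\tfrac12(\Pr[h(X)=1\mid Y=0]+\Pr[h(X)=0\mid Y=1])$, let $R_n(h)$ be the empirical balanced error on $Z_1,\dots,Z_n$, and $R'_n(h)$ the empirical balanced error on the ghost sample, where for a sample $(x_i,y_i)_{i=1}^n$ the empirical balanced error is $$\frac12\left(\frac{\sum_i\mathbb{1}[h(x_i)=1]\mathbb{1}[y_i=0]}{\sum_i\mathbb{1}[y_i=0]}+\frac{\sum_i\mathbb{1}[h(x_i)=0]\mathbb{1}[y_i=1]}{\sum_i\mathbb{1}[y_i=1]}\right).$$ Then for any $t>0$ with $nt^2\ge \dfrac{32\log 12}{\min_{y\in\{0,1\}}\Pr[Y=y]}$, $$\Pr\Big[\sup_{h\in\mathcal{H}}R(h)-R_n(h)>t\Big]\le 2\,\Pr\Big[\sup_{h\in\mathcal{H}}R'_n(h)-R_n(h)>t/2\Big].$$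
   Context: $\varnothing$ is an abstention symbol; points with label $\varnothing$ do not enter the balanced errors. *)

theory Defs
  imports "HOL-Probability.Probability"
begin

datatype label = L0 | L1 | Abst

definition prob_label :: "('a \<times> label) measure \<Rightarrow> label \<Rightarrow> real" where
  "prob_label P y = measure P {z \<in> space P. snd z = y}"

text \<open>Population balanced error R(h) (h x = True means h(x) = 1).\<close>
definition bal_risk :: "('a \<times> label) measure \<Rightarrow> ('a \<Rightarrow> bool) \<Rightarrow> real" where
  "bal_risk P h = (1/2) *
     (measure P {z \<in> space P. h (fst z) \<and> snd z = L0} / prob_label P L0
    + measure P {z \<in> space P. \<not> h (fst z) \<and> snd z = L1} / prob_label P L1)"

definition emp_bal_risk :: "nat \<Rightarrow> (nat \<Rightarrow> 'a \<times> label) \<Rightarrow> ('a \<Rightarrow> bool) \<Rightarrow> real" where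
  "emp_bal_risk n zs h = (1/2) *
     (real (card {i\<in>{..<n}. h (fst (zs i)) \<and> snd (zs i) = L0})
        / real (card {i\<in>{..<n}. snd (zs i) = L0})
    + real (card {i\<in>{..<n}. \<not> h (fst (zs i)) \<and> snd (zs i) = L1})
        / real (card {i\<in>{..<n}. snd (zs i) = L1}))"

abbreviation sample_measure :: "nat \<Rightarrow> ('a \<times> label) measure \<Rightarrow> (nat \<Rightarrow> 'a \<times> label) measure" where
  "sample_measure n P \<equiv> PiM {..<n} (\<lambda>_. P)"

end

theory Submission
  imports Defs
begin

(* Fix a sample x with sup_h R(h) - R_n(x,h) > t and a witness h. For a ghost
   sample y, either R'_n(y,h) >= R(h) - t/2, and then (x,y) lies in the ghost event, or one of the
   two class-conditional empirical errors of h on y falls t/2 below its mean. Each such deviation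
   has probability at most 4/(n t^2 Pr[Y=y]) <= 1/4 by Chebyshev's inequality, since the hypothesis
   gives n t^2 Pr[Y=y] >= 32 ln 12 >= 16. Hence every section of the ghost event over the bad event
   has probability at least 1/2, and integrating over x gives Pr[bad] <= 2 Pr[ghost]. *)

lemma integral_PiM_component:
  fixes f :: "'a \<Rightarrow> 'b::{banach, second_countable_topology}"
  assumes "\<And>i. i \<in> I \<Longrightarrow> prob_space (M i)" and "i \<in> I" and "f \<in> borel_measurable (M i)"
  shows "(\<integral>x. f (x i) \<partial>PiM I M) = integral\<^sup>L (M i) f"
proof -
  have "(\<integral>x. f (x i) \<partial>PiM I M) = integral\<^sup>L (distr (PiM I M) (M i) (\<lambda>x. x i)) f"
    using assms by (intro integral_distr[symmetric] measurable_component_singleton)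
  also have "\<dots> = integral\<^sup>L (M i) f"
    using assms by (simp add: distr_PiM_component)
  finally show ?thesis .
qed

context prob_space
begin

lemma integral_PiM_two_components:
  fixes f g :: "'a \<Rightarrow> real"
  assumes "finite I" "i \<in> I" "j \<in> I" "i \<noteq> j" "integrable M f" "integrable M g"
  shows "(\<integral>x. f (x i) * g (x j) \<partial>PiM I (\<lambda>_. M)) = expectation f * expectation g"
proof -
  interpret product_sigma_finite "\<lambda>_. M"
    by (simp add: product_sigma_finite_def sigma_finite_measure_axioms)
  define F where "F k = (if k = i then f else if k = j then g else (\<lambda>_. 1))" for k
  have "(\<Prod>k\<in>I. F k (x k)) = (\<Prod>k\<in>{i, j}. F k (x k))" for x
    using assms by (intro prod.mono_neutral_right) (auto simp: F_def)
  then have "(\<integral>x. f (x i) * g (x j) \<partial>PiM I (\<lambda>_. M)) = (\<integral>x. (\<Prod>k\<in>I. F k (x k)) \<partial>PiM I (\<lambda>_. M))"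
    using assms by (simp add: F_def)
  also have "\<dots> = (\<Prod>k\<in>I. expectation (F k))"
    using assms by (intro product_integral_prod) (auto simp: F_def)
  also have "\<dots> = (\<Prod>k\<in>{i, j}. expectation (F k))"
    using assms by (intro prod.mono_neutral_right) (auto simp: F_def prob_space)
  also have "\<dots> = expectation f * expectation g"
    using assms by (simp add: F_def)
  finally show ?thesis .
qed

lemma integral_PiM_sum_square:
  fixes f :: "'a \<Rightarrow> real"
  assumes "finite I" and f[measurable]: "f \<in> borel_measurable M"
    and f_bound: "\<And>z. z \<in> space M \<Longrightarrow> \<bar>f z\<bar> \<le> K" and "expectation f = 0"
  shows "(\<integral>x. (\<Sum>i\<in>I. f (x i))\<^sup>2 \<partial>PiM I (\<lambda>_. M)) = real (card I) * expectation (\<lambda>z. (f z)\<^sup>2)"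
proof -
  interpret Pi: prob_space "PiM I (\<lambda>_. M)"
    by (intro prob_space_PiM prob_space_axioms)
  have f_int: "integrable M f"
    using f_bound by (intro integrable_const_bound[where B=K]) auto
  have prod_int: "integrable (PiM I (\<lambda>_. M)) (\<lambda>x. f (x i) * f (x j))" if "i \<in> I" "j \<in> I" for i j
  proof (rule Pi.integrable_const_bound[where B="K * K"])
    show "AE x in PiM I (\<lambda>_. M). norm (f (x i) * f (x j)) \<le> K * K"
      using that f_bound by (intro AE_I2) (auto simp: abs_mult space_PiM PiE_iff intro!: mult_mono')
  qed (use that in measurable)
  have diagonal: "(\<integral>x. f (x i) * f (x j) \<partial>PiM I (\<lambda>_. M)) = (if i = j then expectation (\<lambda>z. (f z)\<^sup>2) else 0)"
    if "i \<in> I" "j \<in> I" for i j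
    using that integral_PiM_component[of I "\<lambda>_. M" i "\<lambda>z. (f z)\<^sup>2"]
    by (auto simp: integral_PiM_two_components[OF \<open>finite I\<close> _ _ _ f_int f_int] \<open>expectation f = 0\<close>
        power2_eq_square prob_space_axioms)
  have "(\<integral>x. (\<Sum>i\<in>I. f (x i))\<^sup>2 \<partial>PiM I (\<lambda>_. M)) = (\<integral>x. (\<Sum>i\<in>I. \<Sum>j\<in>I. f (x i) * f (x j)) \<partial>PiM I (\<lambda>_. M))"
    by (simp add: power2_eq_square sum_product)
  also have "\<dots> = (\<Sum>i\<in>I. \<Sum>j\<in>I. \<integral>x. f (x i) * f (x j) \<partial>PiM I (\<lambda>_. M))"
    using prod_int by (simp add: Bochner_Integration.integral_sum Bochner_Integration.integrable_sum)
  also have "\<dots> = real (card I) * expectation (\<lambda>z. (f z)\<^sup>2)"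
    using \<open>finite I\<close> by (simp add: diagonal)
  finally show ?thesis .
qed

lemma iid_sum_nonpos_prob_le:
  fixes g :: "'a \<Rightarrow> real"
  assumes g[measurable]: "g \<in> borel_measurable M" and g_bound: "\<And>z. z \<in> space M \<Longrightarrow> \<bar>g z\<bar> \<le> K"
    and mean_pos: "expectation g > 0" and "n > 0"
  shows "measure (PiM {..<n} (\<lambda>_. M)) {x \<in> space (PiM {..<n} (\<lambda>_. M)). (\<Sum>i<n. g (x i)) \<le> 0}
           \<le> variance g / (real n * (expectation g)\<^sup>2)"
proof -
  let ?Pi = "PiM {..<n} (\<lambda>_. M)"
  interpret Pi: prob_space ?Pi
    by (intro prob_space_PiM prob_space_axioms)
  define \<mu> where "\<mu> = expectation g"
  define f where "f z = g z - \<mu>" for z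
  define S where "S x = (\<Sum>i<n. f (x i))" for x
  have f_meas[measurable]: "f \<in> borel_measurable M"
    unfolding f_def by measurable
  have f_bound: "\<bar>f z\<bar> \<le> K + \<bar>\<mu>\<bar>" if "z \<in> space M" for z
    using g_bound[OF that] by (simp add: f_def)
  have g_int: "integrable M g"
    using g_bound by (intro integrable_const_bound[where B=K]) auto
  have f_mean: "expectation f = 0"
    using g_int by (simp add: f_def[abs_def] \<mu>_def prob_space)
  have S_meas[measurable]: "S \<in> borel_measurable ?Pi"
    unfolding S_def by measurable
  have "\<bar>S x\<bar> \<le> real n * (K + \<bar>\<mu>\<bar>)" if "x \<in> space ?Pi" for x
  proof -
    have "\<bar>S x\<bar> \<le> (\<Sum>i<n. \<bar>f (x i)\<bar>)"
      unfolding S_def by (rule sum_abs)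
    also have "\<dots> \<le> (\<Sum>i<n. K + \<bar>\<mu>\<bar>)"
      using that by (intro sum_mono f_bound) (auto simp: space_PiM)
    finally show ?thesis by simp
  qed
  then have S2_int: "integrable ?Pi (\<lambda>x. (S x)\<^sup>2)"
    by (intro Pi.integrable_const_bound[where B="(real n * (K + \<bar>\<mu>\<bar>))\<^sup>2"] AE_I2)
      (auto simp: abs_le_square_iff[symmetric] intro: order_trans[OF _ abs_ge_self])
  have S_mean: "Pi.expectation S = 0"
    using f_bound unfolding S_def
    by (subst Bochner_Integration.integral_sum)
      (auto simp: integral_PiM_component prob_space_axioms f_mean
        intro!: Pi.integrable_const_bound[where B="K + \<bar>\<mu>\<bar>"] AE_I2 simp: space_PiM PiE_iff)
  have S_var: "Pi.variance S = real n * variance g"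
    using integral_PiM_sum_square[OF _ f_meas f_bound f_mean, of "{..<n}"]
    by (simp add: S_mean S_def f_def \<mu>_def)
  have "{x \<in> space ?Pi. (\<Sum>i<n. g (x i)) \<le> 0} \<subseteq> {x \<in> space ?Pi. real n * \<mu> \<le> \<bar>S x - Pi.expectation S\<bar>}"
    by (auto simp: S_def f_def S_mean sum_subtractf)
  then have "measure ?Pi {x \<in> space ?Pi. (\<Sum>i<n. g (x i)) \<le> 0}
      \<le> measure ?Pi {x \<in> space ?Pi. real n * \<mu> \<le> \<bar>S x - Pi.expectation S\<bar>}"
    by (intro Pi.finite_measure_mono) measurable
  also have "\<dots> \<le> Pi.variance S / (real n * \<mu>)\<^sup>2"
    using \<open>n > 0\<close> mean_pos by (intro Pi.Chebyshev_inequality S2_int) (auto simp: \<mu>_def)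
  also have "\<dots> = variance g / (real n * \<mu>\<^sup>2)"
    unfolding S_var using \<open>n > 0\<close> by (simp add: power2_eq_square)
  finally show ?thesis by (simp add: \<mu>_def)
qed

end

definition sample_count :: "nat \<Rightarrow> 'a set \<Rightarrow> (nat \<Rightarrow> 'a) \<Rightarrow> real" where
  "sample_count n B x = real (card {i \<in> {..<n}. x i \<in> B})"

lemma sample_count_eq_sum_indicator: "sample_count n B x = (\<Sum>i<n. indicator B (x i))"
  unfolding sample_count_def indicator_def by (simp add: sum.If_cases Int_def)

lemma sample_count_mono: "B \<subseteq> C \<Longrightarrow> sample_count n B x \<le> sample_count n C x"
  unfolding sample_count_def by (auto intro!: card_mono)

lemma measurable_sample_count[measurable]:
  "B \<in> sets M \<Longrightarrow> sample_count n B \<in> borel_measurable (PiM {..<n} (\<lambda>_. M))"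
  unfolding sample_count_eq_sum_indicator[abs_def]
  by (intro borel_measurable_sum measurable_compose[OF measurable_component_singleton borel_measurable_indicator])
    auto

lemma (in prob_space) sample_count_ratio_lower_deviation:
  assumes B[measurable]: "B \<in> events" and C[measurable]: "C \<in> events" and "B \<subseteq> C"
    and "prob C > 0" and "s > 0" and "n > 0"
  shows "measure (PiM {..<n} (\<lambda>_. M))
           {x \<in> space (PiM {..<n} (\<lambda>_. M)). sample_count n B x / sample_count n C x < prob B / prob C - s}
         \<le> 1 / (real n * prob C * s\<^sup>2)"
proof (cases "prob B / prob C - s > 0")
  case False
  have ratio_nonneg: "0 \<le> sample_count n B x / sample_count n C x" for x
    by (simp add: sample_count_def)
  with False have empty:
    "{x \<in> space (PiM {..<n} (\<lambda>_. M)). sample_count n B x / sample_count n C x < prob B / prob C - s} = {}"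
    by (auto simp: not_less intro: order_trans[OF _ ratio_nonneg])
  show ?thesis
    unfolding empty by simp
next
  case True
  let ?Pi = "PiM {..<n} (\<lambda>_. M)"
  interpret Pi: prob_space ?Pi
    by (intro prob_space_PiM prob_space_axioms)
  define r where "r = prob B / prob C - s"
  define g where "g z = indicator B z - r * indicator C z" for z :: 'a
  have g_meas[measurable]: "g \<in> borel_measurable M"
    unfolding g_def by measurable
  have "prob B \<le> prob C"
    using \<open>B \<subseteq> C\<close> by (intro finite_measure_mono) auto
  then have "prob B / prob C \<le> 1"
    using \<open>prob C > 0\<close> by simp
  then have r_bounds: "0 < r" "r < 1"
    using True \<open>s > 0\<close> by (auto simp: r_def)
  have g_bound: "\<bar>g z\<bar> \<le> 1" for z
    using r_bounds \<open>B \<subseteq> C\<close> by (auto simp: g_def indicator_def)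
  have g_square: "(g z)\<^sup>2 \<le> indicator C z" for z
    using r_bounds \<open>B \<subseteq> C\<close> by (auto simp: g_def indicator_def power2_eq_square intro: mult_le_one)
  have "expectation g = prob B - r * prob C"
    unfolding g_def[abs_def]
    by (subst Bochner_Integration.integral_diff) (auto intro!: integrable_real_indicator simp: emeasure_eq_measure)
  also have "\<dots> = s * prob C"
    using \<open>prob C > 0\<close> by (simp add: r_def field_simps)
  finally have g_mean: "expectation g = s * prob C" .
  have "variance g = expectation (\<lambda>z. (g z)\<^sup>2) - (expectation g)\<^sup>2"
    using g_bound by (intro variance_eq integrable_const_bound[where B=1]) (auto simp: abs_square_le_1)
  also have "\<dots> \<le> expectation (\<lambda>z. (g z)\<^sup>2)"
    by simp
  also have "\<dots> \<le> expectation (indicator C)"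
    using g_bound g_square
    by (intro integral_mono integrable_const_bound[where B=1] integrable_real_indicator)
      (auto simp: abs_square_le_1 emeasure_eq_measure)
  finally have g_var: "variance g \<le> prob C"
    by simp
  \<comment> \<open>also for the junk ratio a / 0 = 0, since then a = 0\<close>
  have linear_form: "a - r * c \<le> 0" if "0 \<le> a" "a \<le> c" "a / c < r" for a c :: real
    using that by (cases "c = 0") (auto simp: divide_less_eq)
  have "sample_count n B x - r * sample_count n C x \<le> 0"
    if "sample_count n B x / sample_count n C x < r" for x
    using linear_form[OF _ sample_count_mono[OF \<open>B \<subseteq> C\<close>] that] by (simp add: sample_count_def)
  then have "{x \<in> space ?Pi. sample_count n B x / sample_count n C x < r}
      \<subseteq> {x \<in> space ?Pi. (\<Sum>i<n. g (x i)) \<le> 0}"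
    by (auto simp: g_def sum_subtractf sum_distrib_left sample_count_eq_sum_indicator)
  then have "measure ?Pi {x \<in> space ?Pi. sample_count n B x / sample_count n C x < r}
      \<le> measure ?Pi {x \<in> space ?Pi. (\<Sum>i<n. g (x i)) \<le> 0}"
    by (intro Pi.finite_measure_mono) measurable
  also have "\<dots> \<le> variance g / (real n * (s * prob C)\<^sup>2)"
    using iid_sum_nonpos_prob_le[OF g_meas g_bound _ \<open>n > 0\<close>] \<open>s > 0\<close> \<open>prob C > 0\<close>
    by (simp add: g_mean)
  also have "\<dots> \<le> prob C / (real n * (s * prob C)\<^sup>2)"
    using g_var by (simp add: divide_right_mono)
  also have "\<dots> = 1 / (real n * prob C * s\<^sup>2)"
    using \<open>prob C > 0\<close> by (simp add: power2_eq_square)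
  finally show ?thesis by (simp add: r_def)
qed

lemma (in prob_space) ghost_sample_section_prob_ge:
  fixes R :: "'h \<Rightarrow> real" and E :: "'a \<Rightarrow> 'h \<Rightarrow> real"
  assumes "t > 0" and "0 \<le> \<delta>"
    and R_le: "\<And>h. h \<in> H \<Longrightarrow> R h \<le> 1"
    and E_bounds: "\<And>y h. h \<in> H \<Longrightarrow> 0 \<le> E y h \<and> E y h \<le> 1"
    and E_meas: "\<And>h. h \<in> H \<Longrightarrow> (\<lambda>y. E y h) \<in> borel_measurable M"
    and dev: "\<And>h. h \<in> H \<Longrightarrow> prob {y \<in> space M. E y h < R h - t/2} \<le> \<delta>"
    and ghost_event: "{y \<in> space M. t/2 < (SUP h\<in>H. E y h - E x h)} \<in> events"
    and x: "t < (SUP h\<in>H. R h - E x h)"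
  shows "1 - \<delta> \<le> prob {y \<in> space M. t/2 < (SUP h\<in>H. E y h - E x h)}"
proof (cases "H = {}")
  case True
  \<comment> \<open>both suprema are then the same junk value Sup {}\<close>
  then have "{y \<in> space M. t/2 < (SUP h\<in>H. E y h - E x h)} = space M"
    using x \<open>t > 0\<close> by auto
  then show ?thesis
    using \<open>0 \<le> \<delta>\<close> by (simp add: prob_space)
next
  case False
  have bdd_R: "bdd_above ((\<lambda>h. R h - E x h) ` H)"
    using R_le E_bounds by (intro bdd_aboveI2[where M=1]) (meson diff_le_eq le_add_same_cancel1 order_trans)
  have bdd_E: "bdd_above ((\<lambda>h. E y h - E x h) ` H)" for y
    using E_bounds by (intro bdd_aboveI2[where M=1]) (meson diff_le_eq le_add_same_cancel1 order_trans)
  obtain h where "h \<in> H" and h: "t < R h - E x h"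
    using x less_cSUP_iff[OF False bdd_R] by auto
  have "space M - {y \<in> space M. E y h < R h - t/2} \<subseteq> {y \<in> space M. t/2 < (SUP h\<in>H. E y h - E x h)}"
  proof safe
    fix y assume "y \<in> space M" "\<not> E y h < R h - t/2"
    then have "t/2 < E y h - E x h"
      using h by simp
    then show "t/2 < (SUP h\<in>H. E y h - E x h)"
      using \<open>h \<in> H\<close> less_cSUP_iff[OF False bdd_E] by auto
  qed
  then have "prob (space M - {y \<in> space M. E y h < R h - t/2})
      \<le> prob {y \<in> space M. t/2 < (SUP h\<in>H. E y h - E x h)}"
    using ghost_event by (rule finite_measure_mono)
  moreover have "{y \<in> space M. E y h < R h - t/2} \<in> events"
    using E_meas[OF \<open>h \<in> H\<close>] by measurable
  then have "prob (space M - {y \<in> space M. E y h < R h - t/2}) \<ge> 1 - \<delta>"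
    using dev[OF \<open>h \<in> H\<close>] by (simp add: prob_compl)
  ultimately show ?thesis
    by linarith
qed

lemma (in pair_prob_space) measure_pair_measure_ge_sections:
  assumes A: "A \<in> sets M1" and G: "G \<in> sets (M1 \<Otimes>\<^sub>M M2)" and "0 \<le> c"
    and sections: "\<And>x. x \<in> A \<Longrightarrow> c \<le> measure M2 (Pair x -` G)"
  shows "c * measure M1 A \<le> measure (M1 \<Otimes>\<^sub>M M2) G"
proof -
  have "ennreal (c * measure M1 A) = (\<integral>\<^sup>+x. ennreal c * indicator A x \<partial>M1)"
    using A \<open>0 \<le> c\<close> by (simp add: nn_integral_cmult_indicator ennreal_mult M1.emeasure_eq_measure)
  also have "\<dots> \<le> (\<integral>\<^sup>+x. emeasure M2 (Pair x -` G) \<partial>M1)"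
    using sections G
    by (intro nn_integral_mono) (auto simp: indicator_def M2.emeasure_eq_measure intro: ennreal_leI)
  also have "\<dots> = emeasure (M1 \<Otimes>\<^sub>M M2) G"
    using G by (rule M2.emeasure_pair_measure_alt[symmetric])
  finally show ?thesis
    using \<open>0 \<le> c\<close> by (simp add: emeasure_eq_measure ennreal_le_iff)
qed

definition label_set :: "('a \<times> label) measure \<Rightarrow> label \<Rightarrow> ('a \<times> label) set" where
  "label_set P y = {z \<in> space P. snd z = y}"

\<comment> \<open>h x holds iff h predicts label 1, so z is misclassified iff h (fst z) differs from snd z = L1\<close>
definition error_set :: "('a \<times> label) measure \<Rightarrow> ('a \<Rightarrow> bool) \<Rightarrow> label \<Rightarrow> ('a \<times> label) set" where
  "error_set P h y = {z \<in> label_set P y. h (fst z) \<noteq> (y = L1)}"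

definition class_error :: "('a \<times> label) measure \<Rightarrow> ('a \<Rightarrow> bool) \<Rightarrow> label \<Rightarrow> real" where
  "class_error P h y = measure P (error_set P h y) / measure P (label_set P y)"

definition emp_class_error ::
    "nat \<Rightarrow> ('a \<times> label) measure \<Rightarrow> ('a \<Rightarrow> bool) \<Rightarrow> label \<Rightarrow> (nat \<Rightarrow> 'a \<times> label) \<Rightarrow> real" where
  "emp_class_error n P h y zs = sample_count n (error_set P h y) zs / sample_count n (label_set P y) zs"

lemma error_set_subset_label_set: "error_set P h y \<subseteq> label_set P y"
  by (auto simp: error_set_def)

lemma label_set_in_sets:
  assumes "sets P = sets (MX \<Otimes>\<^sub>M count_space UNIV)"
  shows "label_set P y \<in> sets P"
proof -
  have [measurable]: "snd \<in> P \<rightarrow>\<^sub>M count_space UNIV"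
    by (subst measurable_cong_sets[OF assms refl]) simp
  show ?thesis
    unfolding label_set_def by measurable
qed

lemma error_set_in_sets:
  assumes "sets P = sets (MX \<Otimes>\<^sub>M count_space UNIV)" and "h \<in> MX \<rightarrow>\<^sub>M count_space UNIV"
  shows "error_set P h y \<in> sets P"
proof -
  have [measurable]: "snd \<in> P \<rightarrow>\<^sub>M count_space UNIV"
    by (subst measurable_cong_sets[OF assms(1) refl]) simp
  have "fst \<in> P \<rightarrow>\<^sub>M MX"
    by (subst measurable_cong_sets[OF assms(1) refl]) simp
  then have [measurable]: "(\<lambda>z. h (fst z)) \<in> P \<rightarrow>\<^sub>M count_space UNIV"
    using assms(2) by (rule measurable_compose)
  show ?thesis
    unfolding error_set_def label_set_def by measurable
qed

lemma measurable_emp_class_error[measurable]: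
  assumes "sets P = sets (MX \<Otimes>\<^sub>M count_space UNIV)" and "h \<in> MX \<rightarrow>\<^sub>M count_space UNIV"
  shows "emp_class_error n P h y \<in> borel_measurable (sample_measure n P)"
  unfolding emp_class_error_def[abs_def]
  using label_set_in_sets[OF assms(1)] error_set_in_sets[OF assms] by measurable

lemma bal_risk_eq_class_errors: "bal_risk P h = (class_error P h L0 + class_error P h L1) / 2"
proof -
  have "error_set P h L0 = {z \<in> space P. h (fst z) \<and> snd z = L0}"
       "error_set P h L1 = {z \<in> space P. \<not> h (fst z) \<and> snd z = L1}"
    by (auto simp: error_set_def label_set_def)
  then show ?thesis
    by (simp add: bal_risk_def class_error_def prob_label_def label_set_def)
qed

lemma emp_bal_risk_eq_class_errors:
  assumes "zs \<in> space (sample_measure n P)"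
  shows "emp_bal_risk n zs h = (emp_class_error n P h L0 zs + emp_class_error n P h L1 zs) / 2"
proof -
  have "zs i \<in> space P" if "i < n" for i
    using assms that by (auto simp: space_PiM)
  then show ?thesis
    unfolding emp_bal_risk_def emp_class_error_def sample_count_def error_set_def label_set_def
    by (simp add: conj_commute cong: conj_cong)
qed

lemma emp_bal_risk_bounds: "0 \<le> emp_bal_risk n zs h" "emp_bal_risk n zs h \<le> 1"
proof -
  have ratio_le_1:
    "real (card {i\<in>{..<n}. Q (zs i) \<and> snd (zs i) = y}) / real (card {i\<in>{..<n}. snd (zs i) = y}) \<le> 1"
    for Q y
  proof -
    have "card {i\<in>{..<n}. Q (zs i) \<and> snd (zs i) = y} \<le> card {i\<in>{..<n}. snd (zs i) = y}"
      by (auto intro!: card_mono)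
    then show ?thesis
      by (cases "card {i\<in>{..<n}. snd (zs i) = y} = 0") (auto simp: divide_le_eq_1)
  qed
  show "0 \<le> emp_bal_risk n zs h"
    by (simp add: emp_bal_risk_def)
  show "emp_bal_risk n zs h \<le> 1"
    using ratio_le_1[of "\<lambda>z. h (fst z)" L0] ratio_le_1[of "\<lambda>z. \<not> h (fst z)" L1]
    by (simp add: emp_bal_risk_def)
qed

lemma bal_risk_le_1:
  assumes "prob_space P" and "sets P = sets (MX \<Otimes>\<^sub>M count_space UNIV)"
  shows "bal_risk P h \<le> 1"
proof -
  have "class_error P h y \<le> 1" for y
  proof -
    have "measure P (error_set P h y) \<le> measure P (label_set P y)"
      using assms error_set_subset_label_set label_set_in_sets
      by (intro finite_measure.finite_measure_mono prob_space.finite_measure)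
    then show ?thesis
      using measure_nonneg[of P "label_set P y"] by (auto simp: class_error_def divide_le_eq_1 less_le)
  qed
  from this[of L0] this[of L1] show ?thesis
    by (simp add: bal_risk_eq_class_errors)
qed

lemma measurable_emp_bal_risk:
  assumes "sets P = sets (MX \<Otimes>\<^sub>M count_space UNIV)" and "h \<in> MX \<rightarrow>\<^sub>M count_space UNIV"
  shows "(\<lambda>zs. emp_bal_risk n zs h) \<in> borel_measurable (sample_measure n P)"
proof -
  have "(\<lambda>zs. (emp_class_error n P h L0 zs + emp_class_error n P h L1 zs) / 2)
          \<in> borel_measurable (sample_measure n P)"
    using assms by measurable
  then show ?thesis
    by (rule measurable_cong[THEN iffD1, rotated]) (simp add: emp_bal_risk_eq_class_errors)
qed

lemma emp_bal_risk_lower_deviation: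
  assumes "prob_space P" and "sets P = sets (MX \<Otimes>\<^sub>M count_space UNIV)"
    and "h \<in> MX \<rightarrow>\<^sub>M count_space UNIV"
    and "prob_label P L0 > 0" and "prob_label P L1 > 0" and "s > 0" and "n > 0"
  shows "measure (sample_measure n P)
           {zs \<in> space (sample_measure n P). emp_bal_risk n zs h < bal_risk P h - s}
         \<le> 2 / (real n * min (prob_label P L0) (prob_label P L1) * s\<^sup>2)"
proof -
  interpret P: prob_space P by fact
  let ?M = "sample_measure n P"
  interpret M: prob_space ?M
    by (intro prob_space_PiM P.prob_space_axioms)
  define D where "D y = {zs \<in> space ?M. emp_class_error n P h y zs < class_error P h y - s}" for y
  have D_sets: "D y \<in> sets ?M" for y
    unfolding D_def using assms by measurable
  have D_le: "measure ?M (D y) \<le> 1 / (real n * min (prob_label P L0) (prob_label P L1) * s\<^sup>2)"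
    if "y \<in> {L0, L1}" for y
  proof -
    have label_prob: "measure P (label_set P y) = prob_label P y"
      by (simp add: prob_label_def label_set_def)
    have "prob_label P y > 0"
      using that assms by auto
    then have "measure ?M (D y) \<le> 1 / (real n * prob_label P y * s\<^sup>2)"
      unfolding D_def emp_class_error_def class_error_def label_prob[symmetric] using assms
      by (intro P.sample_count_ratio_lower_deviation error_set_subset_label_set label_set_in_sets
          error_set_in_sets)
    also have "\<dots> \<le> 1 / (real n * min (prob_label P L0) (prob_label P L1) * s\<^sup>2)"
      using that assms by (intro divide_left_mono mult_right_mono mult_left_mono mult_pos_pos) auto
    finally show ?thesis .
  qed
  have "{zs \<in> space ?M. emp_bal_risk n zs h < bal_risk P h - s} \<subseteq> D L0 \<union> D L1"
  proof safe
    fix zs assume zs: "zs \<in> space ?M" and lt: "emp_bal_risk n zs h < bal_risk P h - s" and "zs \<notin> D L1"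
    then have "\<not> emp_class_error n P h L1 zs < class_error P h L1 - s"
      by (simp add: D_def)
    with lt have "emp_class_error n P h L0 zs < class_error P h L0 - s"
      unfolding emp_bal_risk_eq_class_errors[OF zs] bal_risk_eq_class_errors by (simp add: field_simps)
    with zs show "zs \<in> D L0"
      by (simp add: D_def)
  qed
  then have "measure ?M {zs \<in> space ?M. emp_bal_risk n zs h < bal_risk P h - s}
      \<le> measure ?M (D L0 \<union> D L1)"
    using D_sets by (intro M.finite_measure_mono) auto
  also have "\<dots> \<le> measure ?M (D L0) + measure ?M (D L1)"
    using D_sets by (intro measure_Un_le)
  also have "\<dots> \<le> 2 / (real n * min (prob_label P L0) (prob_label P L1) * s\<^sup>2)"
    using add_mono[OF D_le[of L0] D_le[of L1]] by (simp add: add_divide_distrib[symmetric])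
  finally show ?thesis .
qed

lemma emp_bal_risk_lower_deviation_le_half:
  assumes "prob_space P" and "sets P = sets (MX \<Otimes>\<^sub>M count_space UNIV)"
    and "h \<in> MX \<rightarrow>\<^sub>M count_space UNIV"
    and "prob_label P L0 > 0" and "prob_label P L1 > 0" and "t > 0"
    and "real n * t\<^sup>2 \<ge> 32 * ln 12 / min (prob_label P L0) (prob_label P L1)"
  shows "measure (sample_measure n P)
           {zs \<in> space (sample_measure n P). emp_bal_risk n zs h < bal_risk P h - t/2} \<le> 1/2"
proof -
  define m where "m = min (prob_label P L0) (prob_label P L1)"
  have "m > 0"
    using assms(4,5) by (simp add: m_def)
  have "1 \<le> ln (12::real)"
    using exp_le by (subst ln_ge_iff) auto
  then have "16 \<le> real n * m * t\<^sup>2"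
    using assms(7) \<open>m > 0\<close> by (simp add: m_def divide_le_eq mult.commute mult.left_commute)
  then have "n > 0"
    by (cases n) auto
  have "measure (sample_measure n P)
          {zs \<in> space (sample_measure n P). emp_bal_risk n zs h < bal_risk P h - t/2}
        \<le> 2 / (real n * m * (t/2)\<^sup>2)"
    unfolding m_def using assms \<open>n > 0\<close> by (intro emp_bal_risk_lower_deviation) auto
  also have "\<dots> \<le> 1/2"
    using \<open>16 \<le> real n * m * t\<^sup>2\<close> by (simp add: power_divide)
  finally show ?thesis .
qed

theorem lemma2:
  fixes MX :: "'a measure" and P :: "('a \<times> label) measure"
    and H :: "('a \<Rightarrow> bool) set" and n :: nat and t :: real
  assumes "prob_space P"
    and "sets P = sets (MX \<Otimes>\<^sub>M count_space UNIV)"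
    and "H \<subseteq> MX \<rightarrow>\<^sub>M count_space UNIV"
    and "prob_label P L0 > 0" and "prob_label P L1 > 0"
    and "t > 0"
    and "real n * t\<^sup>2 \<ge> 32 * ln 12 / min (prob_label P L0) (prob_label P L1)"
    and "{zs \<in> space (sample_measure n P). (SUP h\<in>H. bal_risk P h - emp_bal_risk n zs h) > t}
           \<in> sets (sample_measure n P)"
    and "{p \<in> space (sample_measure n P \<Otimes>\<^sub>M sample_measure n P).
            (SUP h\<in>H. emp_bal_risk n (snd p) h - emp_bal_risk n (fst p) h) > t / 2}
           \<in> sets (sample_measure n P \<Otimes>\<^sub>M sample_measure n P)"
  shows "measure (sample_measure n P)
           {zs \<in> space (sample_measure n P). (SUP h\<in>H. bal_risk P h - emp_bal_risk n zs h) > t}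
         \<le> 2 * measure (sample_measure n P \<Otimes>\<^sub>M sample_measure n P)
           {p \<in> space (sample_measure n P \<Otimes>\<^sub>M sample_measure n P).
            (SUP h\<in>H. emp_bal_risk n (snd p) h - emp_bal_risk n (fst p) h) > t / 2}"
proof -
  interpret P: prob_space P by fact
  let ?M = "sample_measure n P"
  interpret M: prob_space ?M
    by (intro prob_space_PiM P.prob_space_axioms)
  interpret MM: pair_prob_space ?M ?M ..
  define A where "A = {zs \<in> space ?M. (SUP h\<in>H. bal_risk P h - emp_bal_risk n zs h) > t}"
  define G where "G = {p \<in> space (?M \<Otimes>\<^sub>M ?M).
    (SUP h\<in>H. emp_bal_risk n (snd p) h - emp_bal_risk n (fst p) h) > t / 2}"
  have "1/2 \<le> measure ?M (Pair x -` G)" if "x \<in> A" for x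
  proof -
    have G_section:
      "Pair x -` G = {y \<in> space ?M. t/2 < (SUP h\<in>H. emp_bal_risk n y h - emp_bal_risk n x h)}"
      using that by (auto simp: A_def G_def space_pair_measure)
    have "Pair x -` G \<in> sets ?M"
      using assms(9) unfolding G_def by (rule sets_Pair1)
    then have ghost_event:
      "{y \<in> space ?M. t/2 < (SUP h\<in>H. emp_bal_risk n y h - emp_bal_risk n x h)} \<in> sets ?M"
      by (simp only: G_section)
    have "1 - 1/2 \<le> measure ?M {y \<in> space ?M. t/2 < (SUP h\<in>H. emp_bal_risk n y h - emp_bal_risk n x h)}"
    proof (rule M.ghost_sample_section_prob_ge[OF \<open>t > 0\<close> _ _ _ _ _ ghost_event])
      show "bal_risk P h \<le> 1" for h
        using assms(1,2) by (rule bal_risk_le_1)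
      show "0 \<le> emp_bal_risk n y h \<and> emp_bal_risk n y h \<le> 1" for y h
        using emp_bal_risk_bounds by blast
      show "(\<lambda>y. emp_bal_risk n y h) \<in> borel_measurable ?M" if "h \<in> H" for h
        using assms(2,3) that by (auto intro: measurable_emp_bal_risk)
      show "measure ?M {y \<in> space ?M. emp_bal_risk n y h < bal_risk P h - t/2} \<le> 1/2" if "h \<in> H" for h
        using assms(1-7) that by (intro emp_bal_risk_lower_deviation_le_half) auto
      show "t < (SUP h\<in>H. bal_risk P h - emp_bal_risk n x h)"
        using that by (simp add: A_def)
    qed simp
    then show ?thesis
      by (simp add: G_section)
  qed
  then have "1/2 * measure ?M A \<le> measure (?M \<Otimes>\<^sub>M ?M) G"
    using assms(8,9) by (intro MM.measure_pair_measure_ge_sections) (auto simp: A_def G_def)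
  then show ?thesis
    by (simp add: A_def G_def)
qed

end
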